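(* Let $\mathcal{H}_1=(\mathcal{A}_1,\Delta_{\mathcal{A}_1},S_{\mathcal{A}_1},\varepsilon_{\mathcal{A}_1})$ and $\mathcal{H}_2=(\mathcal{A}_2,\Delta_{\mathcal{A}_2},S_{\mathcal{A}_2},\varepsilon_{\mathcal{A}_2})$ be Hopf algebras over a field $k$, $\mathcal{B}$ a unital $k$-algebra, and $\alpha:\mathcal{A}_1\to\mathcal{B}\otimes\mathcal{A}_2$ a quantum family of homomorphisms from $\mathcal{H}_1$ to $\mathcal{H}_2$. Then $\alpha\circ S_{\mathcal{A}_1}=(\mathrm{id}_{\mathcal{B}}\otimes S_{\mathcal{A}_2})\circ\alpha$.
   Context: Sweedler notation $\Delta(a)=a_{(1)}\otimes a_{(2)}$. For $x\in\mathcal{B}\otimes\mathcal{A}_2$, $x_{12}$ and $x_{13}$ denote $x$ placed in legs (1,2), resp. (1,3), of $\mathcal{B}\otimes\mathcal{A}_2\otimes\mathcal{A}_2$ with $\mathds{1}$ in the remaining leg. Definition: a unital algebra homomorphism $\alpha:\mathcal{A}_1\to\mathcal{B}\otimes\mathcal{A}_2$ is a quantum family of homomorphisms from $\mathcal{H}_1$ to $\mathcal{H}_2$ if $\alpha(a_{(1)})_{12}\alpha(a_{(2)})_{13}=(\mathrm{id}_{\mathcal{B}}\otimes\Delta_{\mathcal{A}_2})(\alpha(a))$ for all $a\in\mathcal{A}_1$. *)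

theory Defs
  imports "HOL-Library.Poly_Mapping"
begin

text \<open>Vector spaces over a field 'k are represented by their coordinates with respect
to a basis indexed by a type 'i, i.e. as finitely supported functions from i to k.
The tensor product of spaces with bases 'i and 'j is the space with basis 'i \<times> 'j.\<close>

definition smult :: "'k::field \<Rightarrow> ('i \<Rightarrow>\<^sub>0 'k) \<Rightarrow> ('i \<Rightarrow>\<^sub>0 'k)" where
  "smult c v = Poly_Mapping.map (\<lambda>a. c * a) v"

definition basis_vec :: "'i \<Rightarrow> ('i \<Rightarrow>\<^sub>0 'k::field)" where
  "basis_vec i = Poly_Mapping.single i 1"

definition lin_ext :: "('i \<Rightarrow> ('j \<Rightarrow>\<^sub>0 'k::field)) \<Rightarrow> ('i \<Rightarrow>\<^sub>0 'k) \<Rightarrow> ('j \<Rightarrow>\<^sub>0 'k)" where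
  "lin_ext h x = (\<Sum>i\<in>Poly_Mapping.keys x. smult (Poly_Mapping.lookup x i) (h i))"

lift_definition tprod :: "('a \<Rightarrow>\<^sub>0 'k::field) \<Rightarrow> ('b \<Rightarrow>\<^sub>0 'k) \<Rightarrow> ('a \<times> 'b \<Rightarrow>\<^sub>0 'k)"
  is "\<lambda>f g (a, b). f a * g b"
proof -
  fix f :: "'a \<Rightarrow> 'k" and g :: "'b \<Rightarrow> 'k"
  assume f: "finite {x. f x \<noteq> 0}" and g: "finite {x. g x \<noteq> 0}"
  have "{x. (case x of (a, b) \<Rightarrow> f a * g b) \<noteq> 0} \<subseteq> {x. f x \<noteq> 0} \<times> {x. g x \<noteq> 0}"
    by auto
  then show "finite {x. (case x of (a, b) \<Rightarrow> f a * g b) \<noteq> 0}"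
    using f g by (meson finite_SigmaI finite_subset)
qed

definition tmap :: "(('a \<Rightarrow>\<^sub>0 'k::field) \<Rightarrow> ('c \<Rightarrow>\<^sub>0 'k)) \<Rightarrow> (('b \<Rightarrow>\<^sub>0 'k) \<Rightarrow> ('d \<Rightarrow>\<^sub>0 'k))
    \<Rightarrow> ('a \<times> 'b \<Rightarrow>\<^sub>0 'k) \<Rightarrow> ('c \<times> 'd \<Rightarrow>\<^sub>0 'k)" where
  "tmap f g = lin_ext (\<lambda>(i, j). tprod (f (basis_vec i)) (g (basis_vec j)))"

definition tmult :: "(('a \<Rightarrow>\<^sub>0 'k::field) \<Rightarrow> ('a \<Rightarrow>\<^sub>0 'k) \<Rightarrow> ('a \<Rightarrow>\<^sub>0 'k))
    \<Rightarrow> (('b \<Rightarrow>\<^sub>0 'k) \<Rightarrow> ('b \<Rightarrow>\<^sub>0 'k) \<Rightarrow> ('b \<Rightarrow>\<^sub>0 'k))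
    \<Rightarrow> ('a \<times> 'b \<Rightarrow>\<^sub>0 'k) \<Rightarrow> ('a \<times> 'b \<Rightarrow>\<^sub>0 'k) \<Rightarrow> ('a \<times> 'b \<Rightarrow>\<^sub>0 'k)" where
  "tmult mA mB x y =
     (\<Sum>p\<in>Poly_Mapping.keys x. \<Sum>q\<in>Poly_Mapping.keys y. smult (Poly_Mapping.lookup x p * Poly_Mapping.lookup y q)
        (tprod (mA (basis_vec (fst p)) (basis_vec (fst q))) (mB (basis_vec (snd p)) (basis_vec (snd q)))))"

definition linear_map :: "(('i \<Rightarrow>\<^sub>0 'k::field) \<Rightarrow> ('j \<Rightarrow>\<^sub>0 'k)) \<Rightarrow> bool" where
  "linear_map f \<longleftrightarrow> (\<forall>x y. f (x + y) = f x + f y) \<and> (\<forall>c x. f (smult c x) = smult c (f x))"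

definition linear_functional :: "(('i \<Rightarrow>\<^sub>0 'k::field) \<Rightarrow> 'k) \<Rightarrow> bool" where
  "linear_functional f \<longleftrightarrow> (\<forall>x y. f (x + y) = f x + f y) \<and> (\<forall>c x. f (smult c x) = c * f x)"

definition unital_algebra :: "(('i \<Rightarrow>\<^sub>0 'k::field) \<Rightarrow> ('i \<Rightarrow>\<^sub>0 'k) \<Rightarrow> ('i \<Rightarrow>\<^sub>0 'k))
    \<Rightarrow> ('i \<Rightarrow>\<^sub>0 'k) \<Rightarrow> bool" where
  "unital_algebra m u \<longleftrightarrow>
     (\<forall>x. linear_map (m x)) \<and> (\<forall>y. linear_map (\<lambda>x. m x y)) \<and>
     (\<forall>x y z. m (m x y) z = m x (m y z)) \<and> (\<forall>x. m u x = x \<and> m x u = x)"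

definition unital_algebra_hom :: "(('i \<Rightarrow>\<^sub>0 'k::field) \<Rightarrow> ('i \<Rightarrow>\<^sub>0 'k) \<Rightarrow> ('i \<Rightarrow>\<^sub>0 'k))
    \<Rightarrow> ('i \<Rightarrow>\<^sub>0 'k) \<Rightarrow> (('j \<Rightarrow>\<^sub>0 'k) \<Rightarrow> ('j \<Rightarrow>\<^sub>0 'k) \<Rightarrow> ('j \<Rightarrow>\<^sub>0 'k)) \<Rightarrow> ('j \<Rightarrow>\<^sub>0 'k)
    \<Rightarrow> (('i \<Rightarrow>\<^sub>0 'k) \<Rightarrow> ('j \<Rightarrow>\<^sub>0 'k)) \<Rightarrow> bool" where
  "unital_algebra_hom m u m' u' f \<longleftrightarrow>
     linear_map f \<and> (\<forall>x y. f (m x y) = m' (f x) (f y)) \<and> f u = u'"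

definition assoc3 :: "(('a \<times> 'b) \<times> 'c \<Rightarrow>\<^sub>0 'k::field) \<Rightarrow> ('a \<times> ('b \<times> 'c) \<Rightarrow>\<^sub>0 'k)" where
  "assoc3 = lin_ext (\<lambda>((a, b), c). basis_vec (a, (b, c)))"

definition hopf_algebra :: "(('i \<Rightarrow>\<^sub>0 'k::field) \<Rightarrow> ('i \<Rightarrow>\<^sub>0 'k) \<Rightarrow> ('i \<Rightarrow>\<^sub>0 'k))
    \<Rightarrow> ('i \<Rightarrow>\<^sub>0 'k) \<Rightarrow> (('i \<Rightarrow>\<^sub>0 'k) \<Rightarrow> ('i \<times> 'i \<Rightarrow>\<^sub>0 'k)) \<Rightarrow> (('i \<Rightarrow>\<^sub>0 'k) \<Rightarrow> 'k)
    \<Rightarrow> (('i \<Rightarrow>\<^sub>0 'k) \<Rightarrow> ('i \<Rightarrow>\<^sub>0 'k)) \<Rightarrow> bool" where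
  "hopf_algebra m u \<Delta> \<epsilon> S \<longleftrightarrow>
     unital_algebra m u \<and> linear_map \<Delta> \<and> linear_functional \<epsilon> \<and> linear_map S \<and>
     \<comment> \<open>coassociativity\<close>
     (\<forall>x. assoc3 (tmap \<Delta> id (\<Delta> x)) = tmap id \<Delta> (\<Delta> x)) \<and>
     \<comment> \<open>counit\<close>
     (\<forall>x. lin_ext (\<lambda>(i, j). smult (\<epsilon> (basis_vec i)) (basis_vec j)) (\<Delta> x) = x) \<and>
     (\<forall>x. lin_ext (\<lambda>(i, j). smult (\<epsilon> (basis_vec j)) (basis_vec i)) (\<Delta> x) = x) \<and>
     \<comment> \<open>\<Delta> and \<epsilon> are unital algebra homomorphisms\<close>
     unital_algebra_hom m u (tmult m m) (tprod u u) \<Delta> \<and>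
     (\<forall>x y. \<epsilon> (m x y) = \<epsilon> x * \<epsilon> y) \<and> \<epsilon> u = 1 \<and>
     \<comment> \<open>antipode: m (S \<otimes> id) \<Delta> = u \<epsilon> = m (id \<otimes> S) \<Delta>\<close>
     (\<forall>x. lin_ext (\<lambda>(i, j). m (S (basis_vec i)) (basis_vec j)) (\<Delta> x) = smult (\<epsilon> x) u) \<and>
     (\<forall>x. lin_ext (\<lambda>(i, j). m (basis_vec i) (S (basis_vec j))) (\<Delta> x) = smult (\<epsilon> x) u)"

text \<open>Leg notation: for x in B \<otimes> A, x_12 = x \<otimes> 1 and x_13 in B \<otimes> A \<otimes> A.\<close>
definition leg12 :: "('a \<Rightarrow>\<^sub>0 'k::field) \<Rightarrow> ('b \<times> 'a \<Rightarrow>\<^sub>0 'k) \<Rightarrow> ('b \<times> ('a \<times> 'a) \<Rightarrow>\<^sub>0 'k)" where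
  "leg12 one = lin_ext (\<lambda>(b, a). tprod (basis_vec b) (tprod (basis_vec a) one))"

definition leg13 :: "('a \<Rightarrow>\<^sub>0 'k::field) \<Rightarrow> ('b \<times> 'a \<Rightarrow>\<^sub>0 'k) \<Rightarrow> ('b \<times> ('a \<times> 'a) \<Rightarrow>\<^sub>0 'k)" where
  "leg13 one = lin_ext (\<lambda>(b, a). tprod (basis_vec b) (tprod one (basis_vec a)))"

text \<open>Quantum family of homomorphisms \<alpha> : A1 \<rightarrow> B \<otimes> A2:
  a unital algebra hom with \<alpha>(a_(1))_12 \<alpha>(a_(2))_13 = (id \<otimes> \<Delta>2)(\<alpha> a).
  The Sweedler sum is the linear extension over the coordinates of \<Delta>1 a.\<close>
definition quantum_family_hom ::
  "(('b \<Rightarrow>\<^sub>0 'k::field) \<Rightarrow> ('b \<Rightarrow>\<^sub>0 'k) \<Rightarrow> ('b \<Rightarrow>\<^sub>0 'k)) \<Rightarrow> ('b \<Rightarrow>\<^sub>0 'k)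
   \<Rightarrow> (('i \<Rightarrow>\<^sub>0 'k) \<Rightarrow> ('i \<Rightarrow>\<^sub>0 'k) \<Rightarrow> ('i \<Rightarrow>\<^sub>0 'k)) \<Rightarrow> ('i \<Rightarrow>\<^sub>0 'k) \<Rightarrow> (('i \<Rightarrow>\<^sub>0 'k) \<Rightarrow> ('i \<times> 'i \<Rightarrow>\<^sub>0 'k))
   \<Rightarrow> (('j \<Rightarrow>\<^sub>0 'k) \<Rightarrow> ('j \<Rightarrow>\<^sub>0 'k) \<Rightarrow> ('j \<Rightarrow>\<^sub>0 'k)) \<Rightarrow> ('j \<Rightarrow>\<^sub>0 'k) \<Rightarrow> (('j \<Rightarrow>\<^sub>0 'k) \<Rightarrow> ('j \<times> 'j \<Rightarrow>\<^sub>0 'k))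
   \<Rightarrow> (('i \<Rightarrow>\<^sub>0 'k) \<Rightarrow> ('b \<times> 'j \<Rightarrow>\<^sub>0 'k)) \<Rightarrow> bool" where
  "quantum_family_hom mB uB m1 u1 \<Delta>1 m2 u2 \<Delta>2 \<alpha> \<longleftrightarrow>
     unital_algebra_hom m1 u1 (tmult mB m2) (tprod uB u2) \<alpha> \<and>
     (\<forall>a. lin_ext (\<lambda>(i, j). tmult mB (tmult m2 m2) (leg12 u2 (\<alpha> (basis_vec i))) (leg13 u2 (\<alpha> (basis_vec j))))
            (\<Delta>1 a)
          = tmap id \<Delta>2 (\<alpha> a))"

end

theory Submission
  imports Defs
begin

text \<open>The maps \<open>A\<^sub>1 \<rightarrow> B \<otimes> A\<^sub>2\<close> form an associative unital algebra under the convolution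
  \<open>(f * g)(a) = f(a\<^sub>(\<^sub>1\<^sub>)) g(a\<^sub>(\<^sub>2\<^sub>))\<close> with unit \<open>a \<mapsto> \<epsilon>\<^sub>1(a) 1\<close>, and in it \<open>\<alpha> \<circ> S\<^sub>1\<close> is a two-sided
  inverse of the algebra map \<open>\<alpha>\<close>. Put \<open>\<Phi> = (id \<otimes> \<epsilon>\<^sub>2 1) \<circ> \<alpha>\<close>. Applying \<open>id \<otimes> m\<^sub>2(\<epsilon>\<^sub>2 \<otimes> id)\<close> and
  \<open>id \<otimes> m\<^sub>2(id \<otimes> S\<^sub>2)\<close> to the defining identity of a quantum family gives \<open>\<Phi> * \<alpha> = \<alpha>\<close> and
  \<open>\<alpha> * ((id \<otimes> S\<^sub>2) \<circ> \<alpha>) = \<Phi>\<close>. Cancelling the invertible \<open>\<alpha>\<close> in the first identity gives \<open>\<Phi> = 1\<close>,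
  so \<open>(id \<otimes> S\<^sub>2) \<circ> \<alpha>\<close> is a right inverse of \<open>\<alpha>\<close> and therefore equals \<open>\<alpha> \<circ> S\<^sub>1\<close>.\<close>

section \<open>Linear algebra in coordinates\<close>

lemma lookup_smult [simp]: "Poly_Mapping.lookup (smult c v) i = c * Poly_Mapping.lookup v i"
  by (simp add: smult_def map.rep_eq when_def)

lemma smult_add_right: "smult c (x + y) = smult c x + smult c y"
  by (rule poly_mapping_eqI) (simp add: lookup_add algebra_simps)

lemma smult_add_left: "smult (c + d) x = smult c x + smult d x"
  by (rule poly_mapping_eqI) (simp add: lookup_add algebra_simps)

lemma smult_zero_left [simp]: "smult 0 x = 0"
  by (rule poly_mapping_eqI) simp

lemma smult_one [simp]: "smult 1 x = x"
  by (rule poly_mapping_eqI) simp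

lemma smult_smult [simp]: "smult c (smult d x) = smult (c * d) x"
  by (rule poly_mapping_eqI) (simp add: algebra_simps)

lemma smult_sum: "smult c (sum f A) = (\<Sum>a\<in>A. smult c (f a))"
  by (rule poly_mapping_eqI) (simp add: lookup_sum sum_distrib_left)

lemma keys_smult_subset: "Poly_Mapping.keys (smult c x) \<subseteq> Poly_Mapping.keys x"
  by (auto simp: in_keys_iff)

lemma lin_ext_superset:
  assumes "finite A" "Poly_Mapping.keys x \<subseteq> A"
  shows "lin_ext h x = (\<Sum>i\<in>A. smult (Poly_Mapping.lookup x i) (h i))"
  unfolding lin_ext_def
  by (rule sum.mono_neutral_left) (use assms in \<open>auto simp: in_keys_iff\<close>)

lemma lin_ext_add: "lin_ext h (x + y) = lin_ext h x + lin_ext h y"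
proof -
  let ?A = "Poly_Mapping.keys x \<union> Poly_Mapping.keys y"
  have "Poly_Mapping.keys (x + y) \<subseteq> ?A"
    by (rule keys_add)
  then show ?thesis
    by (simp add: lin_ext_superset[of ?A] lookup_add smult_add_left sum.distrib)
qed

lemma lin_ext_smult: "lin_ext h (smult c x) = smult c (lin_ext h x)"
  by (simp add: lin_ext_superset[of "Poly_Mapping.keys x"] keys_smult_subset smult_sum)

lemma linear_lin_ext [simp]: "linear_map (lin_ext h)"
  by (simp add: linear_map_def lin_ext_add lin_ext_smult)

lemma lin_ext_basis_vec [simp]: "lin_ext h (basis_vec i) = (h i :: _ \<Rightarrow>\<^sub>0 'k::field)"
  by (simp add: lin_ext_def basis_vec_def)

lemma lin_ext_cong: "(\<And>i. h i = h' i) \<Longrightarrow> lin_ext h x = lin_ext h' x"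
  by (simp add: lin_ext_def)

lemma lin_ext_fun_add: "lin_ext (\<lambda>i. h i + h' i) x = lin_ext h x + lin_ext h' x"
  by (simp add: lin_ext_def smult_add_right sum.distrib)

lemma lin_ext_fun_smult: "lin_ext (\<lambda>i. smult c (h i)) x = smult c (lin_ext h x)"
  by (simp add: lin_ext_def smult_sum mult.commute)

lemma lin_ext_basis_vec_id: "lin_ext basis_vec x = (x :: _ \<Rightarrow>\<^sub>0 'k::field)"
proof (rule poly_mapping_eqI)
  fix k
  have "Poly_Mapping.lookup x i * (if i = k then 1 else 0) = (if i = k then Poly_Mapping.lookup x i else 0)"
    for i
    by auto
  then show "Poly_Mapping.lookup (lin_ext basis_vec x) k = Poly_Mapping.lookup x k"
    unfolding lin_ext_def basis_vec_def lookup_sum lookup_smult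
    by (simp add: lookup_single when_def sum.delta in_keys_iff)
qed

lemma linear_add: "linear_map f \<Longrightarrow> f (x + y) = f x + f y"
  by (simp add: linear_map_def)

lemma linear_smult: "linear_map f \<Longrightarrow> f (smult c x) = smult c (f x)"
  by (simp add: linear_map_def)

lemma linear_zero: "linear_map f \<Longrightarrow> f 0 = 0"
  using linear_smult[of f 0 0] by simp

lemma linear_sum: "linear_map f \<Longrightarrow> f (sum g A) = (\<Sum>a\<in>A. f (g a))"
  by (induction A rule: infinite_finite_induct) (auto simp: linear_zero linear_add)

lemma linear_id [simp]: "linear_map id" "linear_map (\<lambda>x. x)"
  by (simp_all add: linear_map_def)

lemma linear_comp: "linear_map f \<Longrightarrow> linear_map g \<Longrightarrow> linear_map (\<lambda>x. f (g x))"
  by (simp add: linear_map_def)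

lemma linear_comp_lin_ext: "linear_map f \<Longrightarrow> f (lin_ext h x) = lin_ext (\<lambda>i. f (h i)) x"
  by (simp add: lin_ext_def linear_sum linear_smult)

lemma linear_eq_lin_ext: "linear_map f \<Longrightarrow> f x = lin_ext (\<lambda>i. f (basis_vec i)) x"
  using linear_comp_lin_ext[of f basis_vec x] by (simp add: lin_ext_basis_vec_id)

lemma linear_eq_on_basis:
  assumes "linear_map f" "linear_map g" "\<And>i. f (basis_vec i) = g (basis_vec i)"
  shows "f x = g x"
  using assms linear_eq_lin_ext[of f x] linear_eq_lin_ext[of g x] by simp

definition bilinear_map :: "(('i \<Rightarrow>\<^sub>0 'k::field) \<Rightarrow> ('j \<Rightarrow>\<^sub>0 'k) \<Rightarrow> ('l \<Rightarrow>\<^sub>0 'k)) \<Rightarrow> bool" where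
  "bilinear_map M \<longleftrightarrow> (\<forall>x. linear_map (M x)) \<and> (\<forall>y. linear_map (\<lambda>x. M x y))"

lemma bilinear_mapD:
  assumes "bilinear_map M"
  shows "M (x + x') y = M x y + M x' y" "M x (y + y') = M x y + M x y'"
    "M (smult c x) y = smult c (M x y)" "M x (smult c y) = smult c (M x y)"
  using assms unfolding bilinear_map_def linear_map_def by auto

lemma bilinear_eq_on_basis:
  assumes F: "bilinear_map F" and G: "bilinear_map G"
    and basis: "\<And>i j. F (basis_vec i) (basis_vec j) = G (basis_vec i) (basis_vec j)"
  shows "F x y = G x y"
proof -
  have basis_left: "F (basis_vec i) y = G (basis_vec i) y" for i
    by (rule linear_eq_on_basis) (use F G basis in \<open>simp_all add: bilinear_map_def\<close>)
  show ?thesis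
    by (rule linear_eq_on_basis[where f = "\<lambda>x. F x y"])
      (use F G basis_left in \<open>simp_all add: bilinear_map_def\<close>)
qed

lemma unital_algebra_bilinear: "unital_algebra m u \<Longrightarrow> bilinear_map m"
  by (simp add: unital_algebra_def bilinear_map_def)

section \<open>Tensor products\<close>

lemma lookup_tprod [simp]:
  "Poly_Mapping.lookup (tprod f g) (a, b) = Poly_Mapping.lookup f a * Poly_Mapping.lookup g b"
  by (simp add: tprod.rep_eq)

lemma bilinear_tprod: "bilinear_map tprod"
  unfolding bilinear_map_def linear_map_def
  by (auto intro!: poly_mapping_eqI simp: lookup_add algebra_simps)

lemmas tprod_simps = bilinear_mapD[OF bilinear_tprod]

lemma tprod_basis_vec: "tprod (basis_vec i) (basis_vec j) = (basis_vec (i, j) :: _ \<Rightarrow>\<^sub>0 'k::field)"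
  by (rule poly_mapping_eqI) (auto simp: basis_vec_def lookup_single when_def split: if_splits)

lemma tmult_eq_lin_ext:
  "tmult mA mB x y = lin_ext (\<lambda>p. lin_ext (\<lambda>q.
      tprod (mA (basis_vec (fst p)) (basis_vec (fst q))) (mB (basis_vec (snd p)) (basis_vec (snd q)))) y) x"
  by (simp add: tmult_def lin_ext_def smult_sum)

lemma bilinear_tmult: "bilinear_map (tmult mA mB)"
  by (simp add: bilinear_map_def linear_map_def tmult_eq_lin_ext lin_ext_add lin_ext_smult
      lin_ext_fun_add lin_ext_fun_smult)

lemma tmult_basis_vec:
  "tmult mA mB (basis_vec (a, b)) (basis_vec (c, d)) =
   tprod (mA (basis_vec a) (basis_vec c)) (mB (basis_vec b) (basis_vec d))"
  by (simp add: tmult_eq_lin_ext)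

lemma tmult_tprod:
  assumes M: "bilinear_map M" and N: "bilinear_map N"
  shows "tmult M N (tprod a b) (tprod c d) = tprod (M a c) (N b d)"
proof -
  note simps = tprod_simps bilinear_mapD[OF M] bilinear_mapD[OF N] bilinear_mapD[OF bilinear_tmult]
  have basis_left: "tmult M N (tprod (basis_vec p) b) (tprod (basis_vec r) d) =
      tprod (M (basis_vec p) (basis_vec r)) (N b d)" for p r
    by (rule bilinear_eq_on_basis[where F = "\<lambda>b d. tmult M N (tprod (basis_vec p) b) (tprod (basis_vec r) d)"])
      (auto simp: bilinear_map_def linear_map_def simps tprod_basis_vec tmult_basis_vec)
  show ?thesis
    by (rule bilinear_eq_on_basis[where F = "\<lambda>a c. tmult M N (tprod a b) (tprod c d)"])
      (auto simp: bilinear_map_def linear_map_def simps basis_left)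
qed

lemma tmult_unital:
  assumes A: "unital_algebra mA uA" and B: "unital_algebra mB uB"
  shows "unital_algebra (tmult mA mB) (tprod uA uB)"
proof -
  let ?m = "tmult mA mB"
  note bilinear = unital_algebra_bilinear[OF A] unital_algebra_bilinear[OF B]
  note simps = bilinear_mapD[OF bilinear_tmult] tmult_tprod[OF bilinear] tprod_basis_vec[symmetric]
  have axioms: "mA (mA x y) z = mA x (mA y z)" "mA uA x = x" "mA x uA = x"
    "mB (mB x' y') z' = mB x' (mB y' z')" "mB uB x' = x'" "mB x' uB = x'" for x y z x' y' z'
    using A B by (auto simp: unital_algebra_def)
  have "?m (tprod uA uB) x = x" "?m x (tprod uA uB) = x" for x
    by (rule linear_eq_on_basis; auto simp: linear_map_def simps axioms)+
  moreover have assoc_basis: "?m (?m (basis_vec (a, b)) y) z = ?m (basis_vec (a, b)) (?m y z)" for a b y z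
    by (rule bilinear_eq_on_basis[where F = "\<lambda>y z. ?m (?m (basis_vec (a, b)) y) z"])
      (auto simp: bilinear_map_def linear_map_def simps axioms split_def)
  moreover have "?m (?m x y) z = ?m x (?m y z)" for x y z
    by (rule linear_eq_on_basis[where f = "\<lambda>x. ?m (?m x y) z"])
      (auto simp: linear_map_def bilinear_mapD[OF bilinear_tmult] assoc_basis)
  ultimately show ?thesis
    using bilinear_tmult[of mA mB] by (simp add: unital_algebra_def bilinear_map_def)
qed

lemma linear_tmap [simp]: "linear_map (tmap f g)"
  by (simp add: tmap_def)

lemmas tmap_simps = linear_add[OF linear_tmap] linear_smult[OF linear_tmap]

lemma tmap_basis_vec: "tmap f g (basis_vec (i, j)) = tprod (f (basis_vec i)) (g (basis_vec j))"
  by (simp add: tmap_def)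

lemma tmap_tprod:
  assumes f: "linear_map f" and g: "linear_map g"
  shows "tmap f g (tprod x y) = tprod (f x) (g y)"
  by (rule bilinear_eq_on_basis[where F = "\<lambda>x y. tmap f g (tprod x y)"])
    (auto simp: bilinear_map_def linear_map_def tprod_simps tmap_simps tmap_basis_vec tprod_basis_vec
      linear_add[OF f] linear_smult[OF f] linear_add[OF g] linear_smult[OF g])

lemma tmap_tmap:
  assumes "linear_map f" "linear_map g"
  shows "tmap f g (tmap f' g' x) = tmap (\<lambda>v. f (f' v)) (\<lambda>v. g (g' v)) x"
  unfolding tmap_def[of f' g'] linear_comp_lin_ext[OF linear_tmap]
  by (simp add: tmap_def[of "\<lambda>v. f (f' v)"] split_def tmap_tprod[OF assms])

lemma tmap_id_id: "tmap (\<lambda>v. v) (\<lambda>v. v) x = x"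
  by (simp add: tmap_def tprod_basis_vec case_prod_beta lin_ext_basis_vec_id)

lemma tmap_tmult_legs:
  assumes mB: "bilinear_map mB" and m: "unital_algebra m u" and G: "linear_map G"
    and K: "bilinear_map K"
    and K_basis: "\<And>b p c q. K (basis_vec (b, p)) (basis_vec (c, q)) =
        tprod (mB (basis_vec b) (basis_vec c)) (G (basis_vec (p, q)))"
  shows "tmap id G (tmult mB (tmult m m) (leg12 u X) (leg13 u Y)) = K X Y"
proof (rule bilinear_eq_on_basis[where G = K])
  have "m u x = x" "m x u = x" for x
    using m by (auto simp: unital_algebra_def)
  then show "tmap id G (tmult mB (tmult m m) (leg12 u (basis_vec p)) (leg13 u (basis_vec q))) =
      K (basis_vec p) (basis_vec q)" for p q
    by (cases p, cases q)
      (simp add: K_basis leg12_def leg13_def tmult_tprod[OF mB bilinear_tmult]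
        tmult_tprod[OF unital_algebra_bilinear[OF m] unital_algebra_bilinear[OF m]]
        tprod_basis_vec tmap_tprod[OF linear_id(1) G])
  show "bilinear_map (\<lambda>X Y. tmap id G (tmult mB (tmult m m) (leg12 u X) (leg13 u Y)))"
    by (simp add: bilinear_map_def linear_map_def tmap_simps bilinear_mapD[OF bilinear_tmult]
        leg12_def leg13_def lin_ext_add lin_ext_smult)
qed (fact K)

section \<open>The convolution algebra\<close>

definition convolution ::
  "(('a \<Rightarrow>\<^sub>0 'k::field) \<Rightarrow> ('a \<Rightarrow>\<^sub>0 'k) \<Rightarrow> ('a \<Rightarrow>\<^sub>0 'k)) \<Rightarrow> (('i \<Rightarrow>\<^sub>0 'k) \<Rightarrow> ('i \<times> 'i \<Rightarrow>\<^sub>0 'k))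
   \<Rightarrow> (('i \<Rightarrow>\<^sub>0 'k) \<Rightarrow> ('a \<Rightarrow>\<^sub>0 'k)) \<Rightarrow> (('i \<Rightarrow>\<^sub>0 'k) \<Rightarrow> ('a \<Rightarrow>\<^sub>0 'k)) \<Rightarrow> ('i \<Rightarrow>\<^sub>0 'k) \<Rightarrow> ('a \<Rightarrow>\<^sub>0 'k)" where
  "convolution M \<Delta> f g a = lin_ext (\<lambda>(i, j). M (f (basis_vec i)) (g (basis_vec j))) (\<Delta> a)"

locale convolution_algebra =
  fixes M :: "('a \<Rightarrow>\<^sub>0 'k::field) \<Rightarrow> ('a \<Rightarrow>\<^sub>0 'k) \<Rightarrow> ('a \<Rightarrow>\<^sub>0 'k)" and U :: "'a \<Rightarrow>\<^sub>0 'k"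
    and \<Delta> :: "('i \<Rightarrow>\<^sub>0 'k) \<Rightarrow> ('i \<times> 'i \<Rightarrow>\<^sub>0 'k)" and \<epsilon> :: "('i \<Rightarrow>\<^sub>0 'k) \<Rightarrow> 'k"
  assumes algebra: "unital_algebra M U"
    and coassoc: "\<And>x. assoc3 (tmap \<Delta> id (\<Delta> x)) = tmap id \<Delta> (\<Delta> x)"
    and counit_left: "\<And>x. lin_ext (\<lambda>(i, j). smult (\<epsilon> (basis_vec i)) (basis_vec j)) (\<Delta> x) = x"
    and counit_right: "\<And>x. lin_ext (\<lambda>(i, j). smult (\<epsilon> (basis_vec j)) (basis_vec i)) (\<Delta> x) = x"
begin

abbreviation conv_unit :: "('i \<Rightarrow>\<^sub>0 'k) \<Rightarrow> ('a \<Rightarrow>\<^sub>0 'k)" where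
  "conv_unit a \<equiv> smult (\<epsilon> a) U"

lemma bilinear_M: "bilinear_map M"
  by (rule unital_algebra_bilinear[OF algebra])

lemma conv_assoc:
  "convolution M \<Delta> (convolution M \<Delta> f g) h a = convolution M \<Delta> f (convolution M \<Delta> g h) a"
proof -
  note simps = bilinear_mapD[OF bilinear_M] lin_ext_add lin_ext_smult tprod_simps tmap_simps
  have M_assoc: "M (M x y) z = M x (M y z)" for x y z
    using algebra by (simp add: unital_algebra_def)
  let ?P = "lin_ext (\<lambda>((i, j), k). M (M (f (basis_vec i)) (g (basis_vec j))) (h (basis_vec k)))"
  let ?Q = "lin_ext (\<lambda>(i, (j, k)). M (f (basis_vec i)) (M (g (basis_vec j)) (h (basis_vec k))))"
  have P_tprod: "?P (tprod w (basis_vec k)) =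
      M (lin_ext (\<lambda>(i, j). M (f (basis_vec i)) (g (basis_vec j))) w) (h (basis_vec k))" for w k
    by (rule linear_eq_on_basis[where f = "\<lambda>w. ?P (tprod w (basis_vec k))"])
      (auto simp: linear_map_def simps tprod_basis_vec split_def)
  have Q_tprod: "?Q (tprod (basis_vec i) w) =
      M (f (basis_vec i)) (lin_ext (\<lambda>(j, k). M (g (basis_vec j)) (h (basis_vec k))) w)" for w i
    by (rule linear_eq_on_basis[where f = "\<lambda>w. ?Q (tprod (basis_vec i) w)"])
      (auto simp: linear_map_def simps tprod_basis_vec split_def)
  have left: "lin_ext (\<lambda>(i, j). M (convolution M \<Delta> f g (basis_vec i)) (h (basis_vec j))) z =
      ?P (tmap \<Delta> id z)" for z
    by (rule linear_eq_on_basis[where g = "\<lambda>z. ?P (tmap \<Delta> id z)"])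
      (auto simp: linear_map_def simps tmap_basis_vec P_tprod convolution_def)
  have right: "lin_ext (\<lambda>(i, j). M (f (basis_vec i)) (convolution M \<Delta> g h (basis_vec j))) z =
      ?Q (tmap id \<Delta> z)" for z
    by (rule linear_eq_on_basis[where g = "\<lambda>z. ?Q (tmap id \<Delta> z)"])
      (auto simp: linear_map_def simps tmap_basis_vec Q_tprod convolution_def)
  have Q_assoc3: "?Q (assoc3 w) = ?P w" for w
    by (rule linear_eq_on_basis[where f = "\<lambda>w. ?Q (assoc3 w)"])
      (auto simp: linear_map_def simps split_def assoc3_def M_assoc)
  show ?thesis
    unfolding convolution_def[of M \<Delta> "convolution M \<Delta> f g"]
      convolution_def[of M \<Delta> f "convolution M \<Delta> g h"] left right
    by (simp add: coassoc[symmetric] Q_assoc3)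
qed

lemma conv_unit_left:
  assumes f: "linear_map f"
  shows "convolution M \<Delta> conv_unit f a = f a"
proof -
  have "M U x = x" for x
    using algebra by (simp add: unital_algebra_def)
  then have "convolution M \<Delta> conv_unit f a =
      lin_ext (\<lambda>p. f (case p of (i, j) \<Rightarrow> smult (\<epsilon> (basis_vec i)) (basis_vec j))) (\<Delta> a)"
    unfolding convolution_def
    by (intro lin_ext_cong) (auto simp: bilinear_mapD[OF bilinear_M] linear_smult[OF f])
  also have "\<dots> = f a"
    by (simp add: linear_comp_lin_ext[OF f, symmetric] counit_left)
  finally show ?thesis .
qed

lemma conv_unit_right:
  assumes f: "linear_map f"
  shows "convolution M \<Delta> f conv_unit a = f a"
proof -
  have "M x U = x" for x
    using algebra by (simp add: unital_algebra_def)
  then have "convolution M \<Delta> f conv_unit a =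
      lin_ext (\<lambda>p. f (case p of (i, j) \<Rightarrow> smult (\<epsilon> (basis_vec j)) (basis_vec i))) (\<Delta> a)"
    unfolding convolution_def
    by (intro lin_ext_cong) (auto simp: bilinear_mapD[OF bilinear_M] linear_smult[OF f])
  also have "\<dots> = f a"
    by (simp add: linear_comp_lin_ext[OF f, symmetric] counit_right)
  finally show ?thesis .
qed

lemma conv_left_unit_unique:
  assumes g: "linear_map g" and absorb: "convolution M \<Delta> g f = f"
    and right_inverse: "convolution M \<Delta> f r = conv_unit"
  shows "g a = conv_unit a"
proof -
  have "g a = convolution M \<Delta> g (convolution M \<Delta> f r) a"
    by (simp add: right_inverse conv_unit_right[OF g])
  also have "\<dots> = convolution M \<Delta> (convolution M \<Delta> g f) r a"
    by (rule conv_assoc[symmetric])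
  also have "\<dots> = conv_unit a"
    by (simp add: absorb right_inverse)
  finally show ?thesis .
qed

lemma conv_left_inverse_eq_right_inverse:
  assumes "linear_map l" "linear_map r"
    and "convolution M \<Delta> l f = conv_unit" "convolution M \<Delta> f r = conv_unit"
  shows "l a = r a"
proof -
  have "r a = convolution M \<Delta> (convolution M \<Delta> l f) r a"
    by (simp add: assms(3) conv_unit_left[OF assms(2)])
  also have "\<dots> = l a"
    by (simp add: conv_assoc assms(4) conv_unit_right[OF assms(1)])
  finally show ?thesis by simp
qed

end

lemma hopf_convolution_algebra:
  assumes "hopf_algebra m u \<Delta> \<epsilon> S" "unital_algebra M U"
  shows "convolution_algebra M U \<Delta> \<epsilon>"
  using assms by (simp add: convolution_algebra_def hopf_algebra_def)

section \<open>Antipodes and quantum families of homomorphisms\<close>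

lemma hom_comp_antipode_conv_inverse:
  assumes H: "hopf_algebra m u \<Delta> \<epsilon> S" and \<alpha>: "unital_algebra_hom m u M U \<alpha>"
  shows "convolution M \<Delta> (\<lambda>a. \<alpha> (S a)) \<alpha> = (\<lambda>a. smult (\<epsilon> a) U)"
    and "convolution M \<Delta> \<alpha> (\<lambda>a. \<alpha> (S a)) = (\<lambda>a. smult (\<epsilon> a) U)"
proof -
  have lin: "linear_map \<alpha>" and mult: "\<And>x y. \<alpha> (m x y) = M (\<alpha> x) (\<alpha> y)" and unit: "\<alpha> u = U"
    using \<alpha> by (auto simp: unital_algebra_hom_def)
  have antipode: "\<And>x. lin_ext (\<lambda>(i, j). m (S (basis_vec i)) (basis_vec j)) (\<Delta> x) = smult (\<epsilon> x) u"
      "\<And>x. lin_ext (\<lambda>(i, j). m (basis_vec i) (S (basis_vec j))) (\<Delta> x) = smult (\<epsilon> x) u"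
    using H by (simp_all add: hopf_algebra_def)
  have "convolution M \<Delta> (\<lambda>a. \<alpha> (S a)) \<alpha> a =
      \<alpha> (lin_ext (\<lambda>(i, j). m (S (basis_vec i)) (basis_vec j)) (\<Delta> a))" for a
    unfolding convolution_def linear_comp_lin_ext[OF lin] by (intro lin_ext_cong) (auto simp: mult)
  then show "convolution M \<Delta> (\<lambda>a. \<alpha> (S a)) \<alpha> = (\<lambda>a. smult (\<epsilon> a) U)"
    by (simp add: fun_eq_iff antipode linear_smult[OF lin] unit)
  have "convolution M \<Delta> \<alpha> (\<lambda>a. \<alpha> (S a)) a =
      \<alpha> (lin_ext (\<lambda>(i, j). m (basis_vec i) (S (basis_vec j))) (\<Delta> a))" for a
    unfolding convolution_def linear_comp_lin_ext[OF lin] by (intro lin_ext_cong) (auto simp: mult)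
  then show "convolution M \<Delta> \<alpha> (\<lambda>a. \<alpha> (S a)) = (\<lambda>a. smult (\<epsilon> a) U)"
    by (simp add: fun_eq_iff antipode linear_smult[OF lin] unit)
qed

lemma quantum_family_conv_tmap:
  assumes QF: "quantum_family_hom mB uB m1 u1 \<Delta>1 m2 u2 \<Delta>2 \<alpha>" and G: "linear_map G"
    and factor: "\<And>X Y. tmap id G (tmult mB (tmult m2 m2) (leg12 u2 X) (leg13 u2 Y)) =
      tmult mB m2 (F X) (F' Y)"
  shows "convolution (tmult mB m2) \<Delta>1 (\<lambda>a. F (\<alpha> a)) (\<lambda>a. F' (\<alpha> a)) a =
    tmap id (\<lambda>v. G (\<Delta>2 v)) (\<alpha> a)"
proof -
  have family: "lin_ext (\<lambda>(i, j). tmult mB (tmult m2 m2) (leg12 u2 (\<alpha> (basis_vec i)))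
      (leg13 u2 (\<alpha> (basis_vec j)))) (\<Delta>1 a) = tmap id \<Delta>2 (\<alpha> a)"
    using QF by (simp add: quantum_family_hom_def)
  have "convolution (tmult mB m2) \<Delta>1 (\<lambda>a. F (\<alpha> a)) (\<lambda>a. F' (\<alpha> a)) a =
      lin_ext (\<lambda>p. tmap id G (case p of (i, j) \<Rightarrow>
        tmult mB (tmult m2 m2) (leg12 u2 (\<alpha> (basis_vec i))) (leg13 u2 (\<alpha> (basis_vec j))))) (\<Delta>1 a)"
    unfolding convolution_def by (intro lin_ext_cong) (auto simp: factor)
  also have "\<dots> = tmap id G (tmap id \<Delta>2 (\<alpha> a))"
    by (simp add: linear_comp_lin_ext[OF linear_tmap, symmetric] family)
  also have "\<dots> = tmap id (\<lambda>v. G (\<Delta>2 v)) (\<alpha> a)"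
    by (simp add: tmap_tmap G id_def)
  finally show ?thesis .
qed

lemma quantum_family_counit_conv:
  assumes H2: "hopf_algebra m2 u2 \<Delta>2 \<epsilon>2 S2" and B: "unital_algebra mB uB"
    and QF: "quantum_family_hom mB uB m1 u1 \<Delta>1 m2 u2 \<Delta>2 \<alpha>"
  shows "convolution (tmult mB m2) \<Delta>1 (\<lambda>a. tmap id (\<lambda>v. smult (\<epsilon>2 v) u2) (\<alpha> a)) \<alpha> = \<alpha>"
proof
  fix a
  let ?G = "lin_ext (\<lambda>(i, j). smult (\<epsilon>2 (basis_vec i)) (basis_vec j))"
  have A2: "unital_algebra m2 u2" and counit: "\<And>x. ?G (\<Delta>2 x) = x"
    using H2 by (auto simp: hopf_algebra_def)
  have m2_unit: "m2 u2 x = x" for x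
    using A2 by (simp add: unital_algebra_def)
  note bilinear = unital_algebra_bilinear[OF B] unital_algebra_bilinear[OF A2]
  have factor: "tmap id ?G (tmult mB (tmult m2 m2) (leg12 u2 X) (leg13 u2 Y)) =
      tmult mB m2 (tmap id (\<lambda>v. smult (\<epsilon>2 v) u2) X) Y" for X Y
  proof (rule tmap_tmult_legs[OF bilinear(1) A2 linear_lin_ext])
    show "bilinear_map (\<lambda>X Y. tmult mB m2 (tmap id (\<lambda>v. smult (\<epsilon>2 v) u2) X) Y)"
      by (simp add: bilinear_map_def linear_map_def tmap_simps bilinear_mapD[OF bilinear_tmult])
    show "tmult mB m2 (tmap id (\<lambda>v. smult (\<epsilon>2 v) u2) (basis_vec (b, p))) (basis_vec (c, q)) =
        tprod (mB (basis_vec b) (basis_vec c)) (?G (basis_vec (p, q)))" for b p c q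
      by (simp add: tmap_basis_vec)
        (simp add: tprod_basis_vec[symmetric] tmult_tprod[OF bilinear] bilinear_mapD[OF bilinear(2)] m2_unit)
  qed
  have "convolution (tmult mB m2) \<Delta>1 (\<lambda>a. tmap id (\<lambda>v. smult (\<epsilon>2 v) u2) (\<alpha> a)) (\<lambda>a. \<alpha> a) a =
      tmap id (\<lambda>v. ?G (\<Delta>2 v)) (\<alpha> a)"
    by (rule quantum_family_conv_tmap[OF QF linear_lin_ext factor])
  then show "convolution (tmult mB m2) \<Delta>1 (\<lambda>a. tmap id (\<lambda>v. smult (\<epsilon>2 v) u2) (\<alpha> a)) \<alpha> a = \<alpha> a"
    by (simp add: counit id_def tmap_id_id)
qed

lemma quantum_family_antipode_conv:
  assumes H2: "hopf_algebra m2 u2 \<Delta>2 \<epsilon>2 S2" and B: "unital_algebra mB uB"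
    and QF: "quantum_family_hom mB uB m1 u1 \<Delta>1 m2 u2 \<Delta>2 \<alpha>"
  shows "convolution (tmult mB m2) \<Delta>1 \<alpha> (\<lambda>a. tmap id S2 (\<alpha> a)) =
    (\<lambda>a. tmap id (\<lambda>v. smult (\<epsilon>2 v) u2) (\<alpha> a))"
proof
  fix a
  let ?G = "lin_ext (\<lambda>(i, j). m2 (basis_vec i) (S2 (basis_vec j)))"
  have A2: "unital_algebra m2 u2" and antipode: "\<And>x. ?G (\<Delta>2 x) = smult (\<epsilon>2 x) u2"
    using H2 by (simp_all add: hopf_algebra_def)
  note bilinear = unital_algebra_bilinear[OF B] unital_algebra_bilinear[OF A2]
  have factor: "tmap id ?G (tmult mB (tmult m2 m2) (leg12 u2 X) (leg13 u2 Y)) =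
      tmult mB m2 X (tmap id S2 Y)" for X Y
  proof (rule tmap_tmult_legs[OF bilinear(1) A2 linear_lin_ext])
    show "bilinear_map (\<lambda>X Y. tmult mB m2 X (tmap id S2 Y))"
      by (simp add: bilinear_map_def linear_map_def tmap_simps bilinear_mapD[OF bilinear_tmult])
    show "tmult mB m2 (basis_vec (b, p)) (tmap id S2 (basis_vec (c, q))) =
        tprod (mB (basis_vec b) (basis_vec c)) (?G (basis_vec (p, q)))" for b p c q
      by (simp add: tmap_basis_vec) (simp add: tprod_basis_vec[symmetric] tmult_tprod[OF bilinear])
  qed
  have "convolution (tmult mB m2) \<Delta>1 (\<lambda>a. \<alpha> a) (\<lambda>a. tmap id S2 (\<alpha> a)) a =
      tmap id (\<lambda>v. ?G (\<Delta>2 v)) (\<alpha> a)"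
    by (rule quantum_family_conv_tmap[OF QF linear_lin_ext factor])
  then show "convolution (tmult mB m2) \<Delta>1 \<alpha> (\<lambda>a. tmap id S2 (\<alpha> a)) a =
      tmap id (\<lambda>v. smult (\<epsilon>2 v) u2) (\<alpha> a)"
    by (simp add: antipode)
qed

theorem theorem3p7:
  fixes m1 :: "('i \<Rightarrow>\<^sub>0 'k::field) \<Rightarrow> ('i \<Rightarrow>\<^sub>0 'k) \<Rightarrow> ('i \<Rightarrow>\<^sub>0 'k)"
    and m2 :: "('j \<Rightarrow>\<^sub>0 'k) \<Rightarrow> ('j \<Rightarrow>\<^sub>0 'k) \<Rightarrow> ('j \<Rightarrow>\<^sub>0 'k)"
    and mB :: "('b \<Rightarrow>\<^sub>0 'k) \<Rightarrow> ('b \<Rightarrow>\<^sub>0 'k) \<Rightarrow> ('b \<Rightarrow>\<^sub>0 'k)"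
    and \<alpha> :: "('i \<Rightarrow>\<^sub>0 'k) \<Rightarrow> ('b \<times> 'j \<Rightarrow>\<^sub>0 'k)"
  assumes H1: "hopf_algebra m1 u1 \<Delta>1 \<epsilon>1 S1"
    and H2: "hopf_algebra m2 u2 \<Delta>2 \<epsilon>2 S2"
    and B: "unital_algebra mB uB"
    and QF: "quantum_family_hom mB uB m1 u1 \<Delta>1 m2 u2 \<Delta>2 \<alpha>"
  shows "\<forall>a. \<alpha> (S1 a) = tmap id S2 (\<alpha> a)"
proof
  fix a
  have A2: "unital_algebra m2 u2" and S1: "linear_map S1"
    using H1 H2 by (simp_all add: hopf_algebra_def)
  have \<alpha>_hom: "unital_algebra_hom m1 u1 (tmult mB m2) (tprod uB u2) \<alpha>"
    using QF by (simp add: quantum_family_hom_def)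
  then have \<alpha>: "linear_map \<alpha>"
    by (simp add: unital_algebra_hom_def)
  interpret convolution_algebra "tmult mB m2" "tprod uB u2" \<Delta>1 \<epsilon>1
    by (rule hopf_convolution_algebra[OF H1 tmult_unital[OF B A2]])
  note inverse = hom_comp_antipode_conv_inverse[OF H1 \<alpha>_hom]
  have "tmap id (\<lambda>v. smult (\<epsilon>2 v) u2) (\<alpha> x) = conv_unit x" for x
    by (rule conv_left_unit_unique[OF linear_comp[OF linear_tmap \<alpha>]
          quantum_family_counit_conv[OF H2 B QF] inverse(2)])
  then have "convolution (tmult mB m2) \<Delta>1 \<alpha> (\<lambda>a. tmap id S2 (\<alpha> a)) = conv_unit"
    using quantum_family_antipode_conv[OF H2 B QF] by auto
  then show "\<alpha> (S1 a) = tmap id S2 (\<alpha> a)"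
    by (rule conv_left_inverse_eq_right_inverse[OF linear_comp[OF \<alpha> S1] linear_comp[OF linear_tmap \<alpha>]
          inverse(1)])
qed

end
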